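(* Let $U\in\mathbb R^{\hat D\times\hat D}$, let $D_{t+1},\dots,D_T$ be diagonal $\hat D\times\hat D$ matrices, let $\alpha\ge0$, $\beta>0$, and set $m=\max_k\|U^\top D_{k+1}\|_2$. Suppose $\frac{\alpha}{\beta}m<1$. Then the matrix $M(U)=\prod_{k=t}^{T-1}(\alpha U^\top D_{k+1}+\beta I)$ has condition number $$\kappa_{M(U)}\le\frac{\big(1+\frac{\alpha}{\beta}m\big)^{T-t}}{\big(1-\frac{\alpha}{\beta}m\big)^{T-t}}.$$ In particular, if $\beta=1-\alpha$ and $\alpha=\frac{1}{T m}$ (with $Tm>1$ large enough that $\frac{\alpha}{\beta}m<1$), then $\kappa_{M(U)}=O(1)$ uniformly in $T$.
   Context: The condition number of an invertible matrix $A$ is $\kappa_A=\|A\|_2\,\|A^{-1}\|_2$. This product appears in the FastRNN gradients, where $D_k=\mathrm{diag}(\sigma'(Wx_k+Uh_{k-1}))$. *)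

theory Defs
  imports "HOL-Analysis.Analysis"
begin

definition spec_norm :: "real^'n^'n \<Rightarrow> real" where
  "spec_norm A = onorm (\<lambda>x. A *v x)"

definition cond_num :: "real^'n^'n \<Rightarrow> real" where
  "cond_num A = spec_norm A * spec_norm (matrix_inv A)"

definition diag_matrix :: "real^'n^'n \<Rightarrow> bool" where
  "diag_matrix A \<longleftrightarrow> (\<forall>i j. i \<noteq> j \<longrightarrow> A $ i $ j = 0)"

text \<open>M(U) = prod_{k=t}^{T-1} (alpha U^T D_{k+1} + beta I), factors ordered
  left to right with increasing k.\<close>
definition Mmat :: "real \<Rightarrow> real \<Rightarrow> real^'n^'n \<Rightarrow> (nat \<Rightarrow> real^'n^'n) \<Rightarrow> nat \<Rightarrow> nat \<Rightarrow> real^'n^'n" where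
  "Mmat \<alpha> \<beta> U D t T =
     foldr (\<lambda>k acc. (\<alpha> *\<^sub>R (transpose U ** D (Suc k)) + \<beta> *\<^sub>R mat 1) ** acc) [t..<T] (mat 1)"

definition mval :: "real^'n^'n \<Rightarrow> (nat \<Rightarrow> real^'n^'n) \<Rightarrow> nat \<Rightarrow> nat \<Rightarrow> real" where
  "mval U D t T = Max ((\<lambda>k. spec_norm (transpose U ** D (Suc k))) ` {t..<T})"

end

theory Submission
  imports Defs
begin

text \<open>Each factor \<open>\<alpha> U\<^sup>T D + \<beta> I\<close> is a perturbation of \<open>\<beta> I\<close> of operator norm at most
  \<open>\<alpha> m < \<beta>\<close>, so it stretches every vector by a factor between \<open>\<beta> - \<alpha> m\<close> and \<open>\<beta> + \<alpha> m\<close>.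
  Multiplying over the \<open>T - t\<close> factors, \<open>M(U)\<close> stretches by a factor between
  \<open>(\<beta> - \<alpha> m)\<^sup>T\<^sup>-\<^sup>t\<close> and \<open>(\<beta> + \<alpha> m)\<^sup>T\<^sup>-\<^sup>t\<close>; the lower bound makes it invertible and bounds the norm
  of its inverse, and the quotient of the two bounds is the claimed estimate.
  For \<open>\<alpha> = 1/(T m)\<close> the ratio \<open>r = \<alpha> m / \<beta>\<close> is at most \<open>2/T\<close>, and
  \<open>((1 + r)/(1 - r))\<^sup>T \<le> exp (6 r T) \<le> exp 12\<close>.\<close>

lemma norm_matrix_vector_le_spec_norm: "norm (A *v x) \<le> spec_norm A * norm x"
  unfolding spec_norm_def by (rule onorm[OF matrix_vector_mul_bounded_linear])

lemma spec_norm_nonneg: "0 \<le> spec_norm A"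
  unfolding spec_norm_def by (rule onorm_pos_le[OF matrix_vector_mul_bounded_linear])

lemma spec_norm_le:
  assumes "0 \<le> C" and "\<And>x. norm (A *v x) \<le> C * norm x"
  shows "spec_norm A \<le> C"
  unfolding spec_norm_def using assms by (rule onorm_bound)

lemma matrix_mul_matrix_inv_right:
  assumes "invertible A"
  shows "A ** matrix_inv A = mat 1"
  using assms unfolding invertible_def matrix_inv_def
  by (rule someI_ex[where P = "\<lambda>A'. A ** A' = mat 1 \<and> A' ** A = mat 1", THEN conjunct1])

lemma vector_exists_nonzero: "\<exists>x::real^'n. x \<noteq> 0"
  using axis_eq_0_iff[of "undefined" "1::real"] by blast

lemma invertible_cond_num_le:
  fixes A :: "real^'n^'n"
  assumes c: "0 < c"
    and lower: "\<And>x. c * norm x \<le> norm (A *v x)"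
    and upper: "\<And>x. norm (A *v x) \<le> C * norm x"
  shows "invertible A \<and> cond_num A \<le> C / c"
proof -
  have "inj ((*v) A)"
    unfolding vec.inj_iff_eq_0
  proof (intro allI impI)
    fix x assume "A *v x = 0"
    then show "x = 0" using lower[of x] c by (simp add: mult_le_0_iff)
  qed
  then have inv: "invertible A"
    using invertible_left_inverse matrix_left_invertible_injective by blast
  obtain x0 :: "real^'n" where "x0 \<noteq> 0"
    using vector_exists_nonzero by blast
  then have "c \<le> C" using order_trans[OF lower[of x0] upper[of x0]] by simp
  then have norm_A: "spec_norm A \<le> C"
    using c upper by (intro spec_norm_le) auto
  have norm_inv: "spec_norm (matrix_inv A) \<le> 1 / c"
  proof (rule spec_norm_le)
    fix y
    have "A *v (matrix_inv A *v y) = y"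
      by (simp add: matrix_vector_mul_assoc matrix_mul_matrix_inv_right[OF inv])
    then have "c * norm (matrix_inv A *v y) \<le> norm y" using lower by metis
    then show "norm (matrix_inv A *v y) \<le> 1 / c * norm y" using c by (simp add: field_simps)
  qed (use c in simp)
  have "cond_num A \<le> C * (1 / c)"
    unfolding cond_num_def using norm_A norm_inv c \<open>c \<le> C\<close>
    by (intro mult_mono) (auto intro: spec_norm_nonneg)
  with inv show ?thesis by simp
qed

lemma norm_perturbed_scaled_identity_bounds:
  fixes B :: "real^'n^'n"
  assumes "0 \<le> \<alpha>" and "spec_norm B \<le> m"
  shows "(\<bar>\<beta>\<bar> - \<alpha> * m) * norm y \<le> norm ((\<alpha> *\<^sub>R B + \<beta> *\<^sub>R mat 1) *v y)"
    and "norm ((\<alpha> *\<^sub>R B + \<beta> *\<^sub>R mat 1) *v y) \<le> (\<bar>\<beta>\<bar> + \<alpha> * m) * norm y"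
proof -
  have eq: "(\<alpha> *\<^sub>R B + \<beta> *\<^sub>R mat 1) *v y = \<alpha> *\<^sub>R (B *v y) + \<beta> *\<^sub>R y"
    by (simp add: matrix_vector_mult_add_rdistrib scaleR_matrix_vector_assoc[symmetric]
        matrix_vector_mul_lid)
  have "norm (B *v y) \<le> m * norm y"
    using norm_matrix_vector_le_spec_norm[of B y] assms(2)
    by (meson mult_right_mono norm_ge_zero order_trans)
  then have perturbation: "norm (\<alpha> *\<^sub>R (B *v y)) \<le> \<alpha> * m * norm y"
    using mult_left_mono[OF _ assms(1)] assms(1) by fastforce
  have "norm (\<beta> *\<^sub>R y) - norm (\<alpha> *\<^sub>R (B *v y)) \<le> norm (\<alpha> *\<^sub>R (B *v y) + \<beta> *\<^sub>R y)"
    by (metis add.commute norm_diff_ineq)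
  then show "(\<bar>\<beta>\<bar> - \<alpha> * m) * norm y \<le> norm ((\<alpha> *\<^sub>R B + \<beta> *\<^sub>R mat 1) *v y)"
    unfolding eq left_diff_distrib using perturbation by simp
  have "norm (\<alpha> *\<^sub>R (B *v y) + \<beta> *\<^sub>R y) \<le> norm (\<alpha> *\<^sub>R (B *v y)) + norm (\<beta> *\<^sub>R y)"
    by (rule norm_triangle_ineq)
  then show "norm ((\<alpha> *\<^sub>R B + \<beta> *\<^sub>R mat 1) *v y) \<le> (\<bar>\<beta>\<bar> + \<alpha> * m) * norm y"
    unfolding eq distrib_right using perturbation by simp
qed

lemma norm_matrix_product_bounds:
  fixes F :: "'k \<Rightarrow> real^'n^'n"
  assumes "0 \<le> lo"
    and factor_bounds: "\<And>k x. k \<in> set ks \<Longrightarrow>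
      lo * norm x \<le> norm (F k *v x) \<and> norm (F k *v x) \<le> hi * norm x"
  shows "lo ^ length ks * norm x \<le> norm (foldr (\<lambda>k P. F k ** P) ks (mat 1) *v x)
    \<and> norm (foldr (\<lambda>k P. F k ** P) ks (mat 1) *v x) \<le> hi ^ length ks * norm x"
  using factor_bounds
proof (induction ks)
  case Nil
  then show ?case by (simp add: matrix_vector_mul_lid)
next
  case (Cons k ks)
  define y where "y = foldr (\<lambda>k P. F k ** P) ks (mat 1) *v x"
  have IH: "lo ^ length ks * norm x \<le> norm y" "norm y \<le> hi ^ length ks * norm x"
    using Cons by (auto simp: y_def)
  have step: "foldr (\<lambda>k P. F k ** P) (k # ks) (mat 1) *v x = F k *v y"
    by (simp add: y_def matrix_vector_mul_assoc)
  obtain x0 :: "real^'n" where "x0 \<noteq> 0"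
    using vector_exists_nonzero by blast
  moreover have "lo * norm x0 \<le> hi * norm x0"
    using Cons.prems[of k x0] by auto
  ultimately have "lo \<le> hi" by (simp add: mult_le_cancel_right)
  have "lo * (lo ^ length ks * norm x) \<le> lo * norm y"
    using IH(1) assms(1) by (rule mult_left_mono)
  moreover have "hi * norm y \<le> hi * (hi ^ length ks * norm x)"
    using IH(2) assms(1) \<open>lo \<le> hi\<close> by (intro mult_left_mono) auto
  ultimately show ?case
    using Cons.prems[of k y] step by force
qed

lemma spec_norm_factor_le_mval:
  assumes "k \<in> {t..<T}"
  shows "spec_norm (transpose U ** D (Suc k)) \<le> mval U D t T"
  unfolding mval_def using assms by (auto intro!: Max_ge)

lemma invertible_cond_num_Mmat_le:
  fixes U :: "real^'n^'n"
  assumes \<alpha>: "0 \<le> \<alpha>" and \<beta>: "0 < \<beta>" and small: "\<alpha> / \<beta> * mval U D t T < 1"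
  shows "invertible (Mmat \<alpha> \<beta> U D t T) \<and>
    cond_num (Mmat \<alpha> \<beta> U D t T)
      \<le> (1 + \<alpha> / \<beta> * mval U D t T) ^ (T - t) / (1 - \<alpha> / \<beta> * mval U D t T) ^ (T - t)"
proof -
  define m where "m = mval U D t T"
  have "\<alpha> * m < \<beta>" using small \<beta> unfolding m_def by (simp add: field_simps)
  then have lo: "0 < \<beta> - \<alpha> * m" by simp
  define F where "F k = \<alpha> *\<^sub>R (transpose U ** D (Suc k)) + \<beta> *\<^sub>R mat 1" for k
  have factor_bounds: "(\<beta> - \<alpha> * m) * norm y \<le> norm (F k *v y)
    \<and> norm (F k *v y) \<le> (\<beta> + \<alpha> * m) * norm y" if "k \<in> set [t..<T]" for k y
  proof -
    have "spec_norm (transpose U ** D (Suc k)) \<le> m"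
      unfolding m_def using that by (intro spec_norm_factor_le_mval) simp
    then show ?thesis
      unfolding F_def using norm_perturbed_scaled_identity_bounds[OF \<alpha>, of _ m \<beta> y] \<beta> by simp
  qed
  have "Mmat \<alpha> \<beta> U D t T = foldr (\<lambda>k P. F k ** P) [t..<T] (mat 1)"
    unfolding Mmat_def F_def ..
  then have "(\<beta> - \<alpha> * m) ^ (T - t) * norm x \<le> norm (Mmat \<alpha> \<beta> U D t T *v x)
    \<and> norm (Mmat \<alpha> \<beta> U D t T *v x) \<le> (\<beta> + \<alpha> * m) ^ (T - t) * norm x" for x
    using norm_matrix_product_bounds[of "\<beta> - \<alpha> * m" "[t..<T]" F, OF _ factor_bounds] lo by simp
  then have "invertible (Mmat \<alpha> \<beta> U D t T) \<and>
    cond_num (Mmat \<alpha> \<beta> U D t T) \<le> (\<beta> + \<alpha> * m) ^ (T - t) / (\<beta> - \<alpha> * m) ^ (T - t)"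
    using lo by (intro invertible_cond_num_le) auto
  moreover have "(\<beta> + \<alpha> * m) / (\<beta> - \<alpha> * m) = (1 + \<alpha> / \<beta> * m) / (1 - \<alpha> / \<beta> * m)"
    using \<beta> lo by (simp add: field_simps)
  ultimately show ?thesis by (simp add: m_def power_divide[symmetric])
qed

lemma power_ratio_le_exp:
  fixes r :: real
  assumes "0 \<le> r" and "r \<le> 2 / 3"
  shows "(1 + r) ^ n / (1 - r) ^ n \<le> exp (6 * r * n)"
proof -
  have "1 + r \<le> (1 + 6 * r) * (1 - r)"
    using mult_nonneg_nonpos[of r "6 * r - 4"] assms by (simp add: algebra_simps)
  then have "(1 + r) / (1 - r) \<le> 1 + 6 * r"
    using assms by (simp add: divide_le_eq)
  also have "\<dots> \<le> exp (6 * r)"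
    by (rule exp_ge_add_one_self)
  finally have "((1 + r) / (1 - r)) ^ n \<le> exp (6 * r) ^ n"
    using assms by (intro power_mono) auto
  then show ?thesis
    by (simp add: power_divide exp_of_nat_mult[symmetric] mult.commute)
qed

lemma invertible_cond_num_Mmat_le_exp:
  fixes U :: "real^'n^'n"
  assumes T: "3 \<le> T" and large: "2 \<le> real T * mval U D t T"
    and \<alpha>_def: "\<alpha> = 1 / (real T * mval U D t T)" and \<beta>_def: "\<beta> = 1 - \<alpha>"
  shows "invertible (Mmat \<alpha> \<beta> U D t T) \<and> cond_num (Mmat \<alpha> \<beta> U D t T) \<le> exp 12"
proof -
  define m where "m = mval U D t T"
  define r where "r = \<alpha> / \<beta> * m"
  have T_pos: "0 < real T" using T by simp
  have m_pos: "0 < m"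
    using zero_less_mult_pos[of "real T" m] large T_pos unfolding m_def by linarith
  have "\<alpha> \<le> 1 / 2" using large unfolding \<alpha>_def by (simp add: field_simps)
  then have \<beta>: "1 / 2 \<le> \<beta>" unfolding \<beta>_def by simp
  have \<alpha>: "0 \<le> \<alpha>" using m_pos T_pos unfolding \<alpha>_def m_def by simp
  have "r = 1 / (real T * \<beta>)"
    using m_pos T_pos unfolding r_def \<alpha>_def m_def by simp
  also have "\<dots> \<le> 2 / real T"
    using \<beta> T_pos by (simp add: field_simps)
  finally have r_le: "r \<le> 2 / real T" .
  also have "\<dots> \<le> 2 / 3" using T by (simp add: field_simps)
  finally have r_small: "r \<le> 2 / 3" .
  have r_nonneg: "0 \<le> r" using \<alpha> \<beta> m_pos unfolding r_def by simp
  have "0 < \<beta>" "r < 1" using \<beta> r_small by simp_all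
  then have bound: "invertible (Mmat \<alpha> \<beta> U D t T)
      \<and> cond_num (Mmat \<alpha> \<beta> U D t T) \<le> (1 + r) ^ (T - t) / (1 - r) ^ (T - t)"
    using invertible_cond_num_Mmat_le[OF \<alpha>] unfolding r_def m_def by blast
  have "(1 + r) ^ (T - t) / (1 - r) ^ (T - t) \<le> exp (6 * r * (T - t))"
    using r_nonneg r_small by (rule power_ratio_le_exp)
  also have "\<dots> \<le> exp 12"
  proof -
    have "6 * r * real (T - t) \<le> 6 * (2 / real T) * real T"
      using r_nonneg r_le by (intro mult_mono) auto
    then show ?thesis using T_pos by simp
  qed
  finally show ?thesis using bound by linarith
qed

theorem mainTheorem7:
  "(\<forall>(U::real^'n^'n) (D::nat \<Rightarrow> real^'n^'n) (t::nat) (T::nat) (\<alpha>::real) (\<beta>::real).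
      (\<forall>k\<in>{t<..T}. diag_matrix (D k)) \<longrightarrow> 0 \<le> \<alpha> \<longrightarrow> 0 < \<beta> \<longrightarrow>
      \<alpha> / \<beta> * mval U D t T < 1 \<longrightarrow>
      invertible (Mmat \<alpha> \<beta> U D t T) \<and>
      cond_num (Mmat \<alpha> \<beta> U D t T)
        \<le> (1 + \<alpha> / \<beta> * mval U D t T) ^ (T - t) / (1 - \<alpha> / \<beta> * mval U D t T) ^ (T - t))
   \<and>
   (\<exists>C::real. \<forall>(U::real^'n^'n) (D::nat \<Rightarrow> real^'n^'n) (t::nat) (T::nat).
      (\<forall>k\<in>{t<..T}. diag_matrix (D k)) \<longrightarrow> t < T \<longrightarrow> 3 \<le> T \<longrightarrow>
      2 \<le> real T * mval U D t T \<longrightarrow>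
      (let \<alpha> = 1 / (real T * mval U D t T); \<beta> = 1 - \<alpha> in
         invertible (Mmat \<alpha> \<beta> U D t T) \<and> cond_num (Mmat \<alpha> \<beta> U D t T) \<le> C))"
  unfolding Let_def using invertible_cond_num_Mmat_le invertible_cond_num_Mmat_le_exp by blast

end
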